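(* Let $n\ge 2$ and let $A_1,\dots,A_{2n}$ be the vertices $\pm\mathbf e_1,\dots,\pm\mathbf e_n$ of the cross-polytope in $\mathbb R^n$ (where $\mathbf e_1,\dots,\mathbf e_n$ is the standard basis). Let $\Gamma$ be the sphere of radius $r>0$ centred at the origin $O$, let $E=\{\pm r\mathbf e_i: 1\le i\le n\}$ (the points where the rays $OA_j$ meet $\Gamma$) and $D=\{\tfrac{r}{\sqrt n}(\varepsilon_1,\dots,\varepsilon_n):\varepsilon_j\in\{1,-1\}\}$ (the points where the perpendiculars from $O$ to the facets of the cross-polytope meet $\Gamma$). Fix $h\ge0$ and put $C_n(M,\lambda)=\sum_{i=1}^{2n}(|MA_i|^2+h)^{\lambda/2}$ for $M\in\Gamma$. Then: (1) If $\lambda<0$: the minimum of $C_n(\cdot,\lambda)$ on $\Gamma$ is attained precisely at the points of $D$, and, unless $h=0$ and $r=1$ (in which case $C_n(\cdot,\lambda)$ is unbounded), the maximum is attained precisely at the points of $E$. (2) If $\lambda\in\{0,2,4,6\}$, $C_n(M,\lambda)$ is independent of $M\in\Gamma$; these are the only real $\lambda$ with this property. If $\lambda\in(0,2)\cup(4,6)$, the maximum is attained precisely at the points of $D$ and the minimum precisely at the points of $E$. If $\lambda\in(2,4)$, the minimum is attained precisely at the points of $D$ and the maximum precisely at the points of $E$. (3) If $\lambda>6$: the maximum is attained precisely at the points of $E$ and the minimum precisely at the points of $D$.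
   Context: $|MA|$ denotes Euclidean distance. *)

theory Defs
  imports "HOL-Analysis.Analysis"
begin

definition cross_vertices :: "(real ^ 'n) set" where
  "cross_vertices = {axis i 1 | i. True} \<union> {- axis i 1 | i. True}"

definition pw :: "real \<Rightarrow> real \<Rightarrow> real" where
  "pw b mu = (if b = 0 then (if mu = 0 then 1 else 0) else b powr mu)"

definition Cn :: "real \<Rightarrow> real \<Rightarrow> real ^ 'n \<Rightarrow> real" where
  "Cn h lam M = (\<Sum>A\<in>cross_vertices. pw ((dist M A)\<^sup>2 + h) (lam / 2))"

definition E_pts :: "real \<Rightarrow> (real ^ 'n) set" where
  "E_pts r = (\<lambda>A. r *\<^sub>R A) ` cross_vertices"

definition D_pts :: "real \<Rightarrow> (real ^ 'n) set" where
  "D_pts r = {x. \<forall>i. x $ i = r / sqrt (real CARD('n)) \<or> x $ i = - (r / sqrt (real CARD('n)))}"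

text \<open>Domain on which C_n is finite: the sphere, minus points M with |MA|^2 + h = 0
  (these exist only when h = 0 and r = 1, namely M a vertex).\<close>
definition dom_pts :: "real \<Rightarrow> real \<Rightarrow> (real ^ 'n) set" where
  "dom_pts r h = {M \<in> sphere 0 r. \<forall>A\<in>cross_vertices. (dist M A)\<^sup>2 + h > 0}"

definition argmin_on :: "('a \<Rightarrow> real) \<Rightarrow> 'a set \<Rightarrow> 'a set" where
  "argmin_on f S = {x \<in> S. \<forall>y\<in>S. f x \<le> f y}"

definition argmax_on :: "('a \<Rightarrow> real) \<Rightarrow> 'a set \<Rightarrow> 'a set" where
  "argmax_on f S = {x \<in> S. \<forall>y\<in>S. f y \<le> f x}"

end

theory Submission
  imports Defs
begin

(* For |M| = r one has |M - e_i|^2 + h = a - 2 M_i and |M + e_i|^2 + h = a + 2 M_i with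
   a = r^2 + 1 + h, so writing m = lambda/2,
     C_n(M, 2m) = sum_i g(M_i^2),   g(t) = (a - 2 sqrt t)^m + (a + 2 sqrt t)^m,   sum_i M_i^2 = r^2.
   On [0, a^2/4] the profile g is strictly convex when m(m-1)(m-2)(m-3) > 0 and strictly concave
   when it is < 0.  For convex g the tangent at r^2/n gives sum_i g(M_i^2) >= n g(r^2/n), with
   equality exactly on D, and the chord over [0, r^2] gives sum_i g(M_i^2) <= (n-1) g(0) + g(r^2),
   with equality exactly on E; concavity reverses both.  For m = 1, 2, 3 the profile is affine in t,
   so C_n is constant on the sphere, while for every other lambda <> 0 the strict tangent inequality
   separates a point of D from a point off D.  For lambda < 0, h = 0, r = 1 the vertices lie on the
   sphere and the term |M - e_i|^lambda blows up near them. *)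

lemma MVT_interior:
  fixes f f' :: "real \<Rightarrow> real"
  assumes "a < b" "continuous_on {a..b} f"
    and "\<And>z. a < z \<Longrightarrow> z < b \<Longrightarrow> (f has_real_derivative f' z) (at z)"
  shows "\<exists>z. a < z \<and> z < b \<and> f b - f a = (b - a) * f' z"
proof -
  obtain l z where "a < z" "z < b" "DERIV f z :> l" "f b - f a = (b - a) * l"
    using MVT[OF assms(1,2)] assms(3) by (metis real_differentiable_def)
  with assms(3) show ?thesis
    using DERIV_unique by blast
qed

lemma strict_mono_deriv_secant_less:
  fixes f f' :: "real \<Rightarrow> real"
  assumes "\<alpha> < x" "x < \<beta>" "continuous_on {\<alpha>..\<beta>} f"
    and "\<And>z. \<alpha> < z \<Longrightarrow> z < \<beta> \<Longrightarrow> (f has_real_derivative f' z) (at z)"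
    and "\<And>z w. \<alpha> < z \<Longrightarrow> z < w \<Longrightarrow> w < \<beta> \<Longrightarrow> f' z < f' w"
  shows "(f x - f \<alpha>) * (\<beta> - x) < (f \<beta> - f x) * (x - \<alpha>)"
proof -
  obtain z1 where z1: "\<alpha> < z1" "z1 < x" "f x - f \<alpha> = (x - \<alpha>) * f' z1"
    using MVT_interior[of \<alpha> x f f'] assms continuous_on_subset[OF assms(3)] by force
  obtain z2 where z2: "x < z2" "z2 < \<beta>" "f \<beta> - f x = (\<beta> - x) * f' z2"
    using MVT_interior[of x \<beta> f f'] assms continuous_on_subset[OF assms(3)] by force
  have "(x - \<alpha>) * (\<beta> - x) * f' z1 < (x - \<alpha>) * (\<beta> - x) * f' z2"
    using assms z1 z2 by (intro mult_strict_left_mono) auto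
  moreover have "(f x - f \<alpha>) * (\<beta> - x) = (x - \<alpha>) * (\<beta> - x) * f' z1"
    and "(f \<beta> - f x) * (x - \<alpha>) = (x - \<alpha>) * (\<beta> - x) * f' z2"
    using z1(3) z2(3) by simp_all
  ultimately show ?thesis
    by linarith
qed

lemma strict_mono_deriv_tangent_less:
  fixes f f' :: "real \<Rightarrow> real"
  assumes "\<alpha> \<le> x" "x \<le> \<beta>" "\<alpha> < c" "c < \<beta>" "x \<noteq> c" "continuous_on {\<alpha>..\<beta>} f"
    and "\<And>z. \<alpha> < z \<Longrightarrow> z < \<beta> \<Longrightarrow> (f has_real_derivative f' z) (at z)"
    and "\<And>z w. \<alpha> < z \<Longrightarrow> z < w \<Longrightarrow> w < \<beta> \<Longrightarrow> f' z < f' w"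
  shows "f c + f' c * (x - c) < f x"
proof (cases "x < c")
  case True
  obtain z where z: "x < z" "z < c" "f c - f x = (c - x) * f' z"
    using MVT_interior[of x c f f'] assms True continuous_on_subset[OF assms(6)] by force
  have "(c - x) * f' z < (c - x) * f' c"
    using assms z True by simp
  then show ?thesis
    using z by (simp add: algebra_simps)
next
  case False
  then have "c < x"
    using assms by auto
  obtain z where z: "c < z" "z < x" "f x - f c = (x - c) * f' z"
    using MVT_interior[of c x f f'] assms \<open>c < x\<close> continuous_on_subset[OF assms(6)] by force
  have "(x - c) * f' c < (x - c) * f' z"
    using assms z \<open>c < x\<close> by simp
  then show ?thesis
    using z by (simp add: algebra_simps)
qed

lemma strict_mono_deriv_slope_from_zero:
  fixes f f' :: "real \<Rightarrow> real"
  assumes "f 0 = 0" "0 < x" "x < y" "continuous_on {0..y} f"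
    and "\<And>z. 0 < z \<Longrightarrow> z < y \<Longrightarrow> (f has_real_derivative f' z) (at z)"
    and "\<And>z w. 0 < z \<Longrightarrow> z < w \<Longrightarrow> w < y \<Longrightarrow> f' z < f' w"
  shows "f x / x < f y / y"
proof -
  have "f x * (y - x) < (f y - f x) * x"
    using strict_mono_deriv_secant_less[of 0 x y f f'] assms by simp
  then show ?thesis
    using assms by (simp add: field_simps)
qed

definition powr_pair_sum :: "real \<Rightarrow> real \<Rightarrow> real \<Rightarrow> real" where
  "powr_pair_sum a m x = (a + 2 * x) powr m + (a - 2 * x) powr m"

definition powr_pair_diff :: "real \<Rightarrow> real \<Rightarrow> real \<Rightarrow> real" where
  "powr_pair_diff a m x = (a + 2 * x) powr m - (a - 2 * x) powr m"

definition pair_profile :: "real \<Rightarrow> real \<Rightarrow> real \<Rightarrow> real" where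
  "pair_profile a m t = powr_pair_sum a m (sqrt t)"

definition pair_profile_deriv :: "real \<Rightarrow> real \<Rightarrow> real \<Rightarrow> real" where
  "pair_profile_deriv a m t = m * powr_pair_diff a (m - 1) (sqrt t) / sqrt t"

lemma has_real_derivative_powr_pair_sum:
  assumes "\<bar>x\<bar> < a / 2"
  shows "(powr_pair_sum a m has_real_derivative 2 * m * powr_pair_diff a (m - 1) x) (at x)"
  using assms unfolding powr_pair_sum_def powr_pair_diff_def
  by (auto intro!: derivative_eq_intros simp: abs_less_iff algebra_simps)

lemma has_real_derivative_powr_pair_diff:
  assumes "\<bar>x\<bar> < a / 2"
  shows "(powr_pair_diff a m has_real_derivative 2 * m * powr_pair_sum a (m - 1) x) (at x)"
  using assms unfolding powr_pair_sum_def powr_pair_diff_def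
  by (auto intro!: derivative_eq_intros simp: abs_less_iff algebra_simps)

lemma powr_pair_diff_sign:
  assumes "k \<noteq> 0" "0 < x" "x < a / 2"
  shows "0 < k * powr_pair_diff a k x"
proof (cases "k > 0")
  case True
  then have "(a - 2 * x) powr k < (a + 2 * x) powr k"
    using assms by (intro powr_less_mono2) auto
  with True show ?thesis
    by (simp add: powr_pair_diff_def)
next
  case False
  then have "(a + 2 * x) powr k < (a - 2 * x) powr k"
    using assms by (intro powr_less_mono2_neg) auto
  with False assms(1) show ?thesis
    by (simp add: powr_pair_diff_def mult_neg_neg)
qed

(* This is the convexity of the profile: pair_profile_deriv a m t is the slope u(sqrt t) / sqrt t of
   u x = m * powr_pair_diff a (m - 1) x, an odd function whose second derivative has the sign of
   m(m-1)(m-2)(m-3). *)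
lemma powr_pair_diff_slope_strict_mono:
  assumes "0 < \<sigma> * (m * (m - 1) * (m - 2) * (m - 3))" "0 < x" "x < y" "y < a / 2"
  shows "\<sigma> * m * powr_pair_diff a (m - 1) x / x < \<sigma> * m * powr_pair_diff a (m - 1) y / y"
proof -
  define f where "f x = \<sigma> * m * powr_pair_diff a (m - 1) x" for x
  define f' where "f' x = 2 * \<sigma> * m * (m - 1) * powr_pair_sum a (m - 2) x" for x
  define f'' where "f'' x = 4 * \<sigma> * m * (m - 1) * (m - 2) * powr_pair_diff a (m - 3) x" for x
  have f_deriv: "(f has_real_derivative f' z) (at z)" if "\<bar>z\<bar> < a / 2" for z
    unfolding f_def f'_def using that
    by (auto intro!: derivative_eq_intros has_real_derivative_powr_pair_diff simp: algebra_simps)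
  have f'_deriv: "(f' has_real_derivative f'' z) (at z)" if "\<bar>z\<bar> < a / 2" for z
    unfolding f'_def f''_def using that
    by (auto intro!: derivative_eq_intros has_real_derivative_powr_pair_sum simp: algebra_simps)
  have f''_pos: "0 < f'' z" if "0 < z" "z < a / 2" for z
  proof -
    have "m \<noteq> 3"
      using assms(1) by auto
    then have "0 < (\<sigma> * (m * (m - 1) * (m - 2) * (m - 3))) * ((m - 3) * powr_pair_diff a (m - 3) z)"
      using assms(1) powr_pair_diff_sign[of "m - 3" z a] that by simp
    also have "\<dots> = (m - 3)\<^sup>2 * f'' z / 4"
      by (simp add: f''_def power2_eq_square)
    finally show ?thesis
      by (simp add: zero_less_mult_iff)
  qed
  have "f' z < f' w" if "0 < z" "z < w" "w < y" for z w
  proof (rule DERIV_pos_imp_increasing_open[OF \<open>z < w\<close>])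
    show "\<exists>l. (f' has_real_derivative l) (at u) \<and> 0 < l" if "z < u" "u < w" for u
      using \<open>0 < z\<close> that \<open>w < y\<close> assms(4) by (intro exI[of _ "f'' u"] conjI f'_deriv f''_pos) auto
    show "continuous_on {z..w} f'"
      using that assms(4)
      by (intro continuous_at_imp_continuous_on ballI DERIV_isCont[OF f'_deriv]) auto
  qed
  moreover have "continuous_on {0..y} f"
    using assms by (intro continuous_at_imp_continuous_on ballI DERIV_isCont[OF f_deriv]) auto
  moreover have "f 0 = 0"
    by (simp add: f_def powr_pair_diff_def)
  ultimately have "f x / x < f y / y"
    using assms f_deriv by (intro strict_mono_deriv_slope_from_zero[where f' = f']) auto
  then show ?thesis
    by (simp add: f_def)
qed

lemma sqrt_less_half_iff:
  assumes "0 < a"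
  shows "sqrt t < a / 2 \<longleftrightarrow> t < a\<^sup>2 / 4" and "sqrt t \<le> a / 2 \<longleftrightarrow> t \<le> a\<^sup>2 / 4"
proof -
  have half: "a / 2 = sqrt (a\<^sup>2 / 4)"
    using assms by (simp add: real_sqrt_divide)
  show "sqrt t < a / 2 \<longleftrightarrow> t < a\<^sup>2 / 4"
    by (metis half real_sqrt_less_iff)
  show "sqrt t \<le> a / 2 \<longleftrightarrow> t \<le> a\<^sup>2 / 4"
    by (metis half real_sqrt_le_iff)
qed

lemma has_real_derivative_pair_profile:
  assumes "0 < a" "0 < t" "t < a\<^sup>2 / 4"
  shows "(pair_profile a m has_real_derivative pair_profile_deriv a m t) (at t)"
proof -
  have "\<bar>sqrt t\<bar> < a / 2"
    using assms sqrt_less_half_iff(1)[of a t] by simp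
  from DERIV_chain2[OF has_real_derivative_powr_pair_sum[OF this] DERIV_real_sqrt[OF \<open>0 < t\<close>]]
  show ?thesis
    unfolding pair_profile_def[abs_def] pair_profile_deriv_def by (simp add: field_simps)
qed

lemma pair_profile_deriv_strict_mono:
  assumes "0 < \<sigma> * (m * (m - 1) * (m - 2) * (m - 3))" "0 < a" "0 < s" "s < t" "t < a\<^sup>2 / 4"
  shows "\<sigma> * pair_profile_deriv a m s < \<sigma> * pair_profile_deriv a m t"
  using powr_pair_diff_slope_strict_mono[OF assms(1), of "sqrt s" "sqrt t" a] assms
    sqrt_less_half_iff(1)[of a t]
  by (simp add: pair_profile_deriv_def)

lemma continuous_on_pair_profile:
  assumes "0 < a" "b \<le> a\<^sup>2 / 4" "b < a\<^sup>2 / 4 \<or> 0 < m"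
  shows "continuous_on {0..b} (pair_profile a m)"
proof -
  have "0 \<le> a - 2 * sqrt x \<and> (a - 2 * sqrt x = 0 \<longrightarrow> 0 < m)" if "x \<in> {0..b}" for x
    using that assms sqrt_less_half_iff[of a x] by auto
  moreover have "0 \<le> a + 2 * sqrt x \<and> (a + 2 * sqrt x = 0 \<longrightarrow> 0 < m)" if "x \<in> {0..b}" for x
    using that assms by (simp add: add_pos_nonneg add_nonneg_eq_0_iff)
  ultimately show ?thesis
    unfolding pair_profile_def[abs_def] powr_pair_sum_def
    by (intro continuous_on_add continuous_on_powr' continuous_intros) auto
qed

lemma pair_profile_tangent_less:
  assumes "0 < \<sigma> * (m * (m - 1) * (m - 2) * (m - 3))" "0 < a" "0 < c" "c < a\<^sup>2 / 4" "0 \<le> t"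
    and "t < a\<^sup>2 / 4 \<or> 0 < m \<and> t \<le> a\<^sup>2 / 4" "t \<noteq> c"
  shows "\<sigma> * pair_profile a m c + \<sigma> * pair_profile_deriv a m c * (t - c) < \<sigma> * pair_profile a m t"
proof -
  define \<beta> where "\<beta> = (if t < a\<^sup>2 / 4 then (max t c + a\<^sup>2 / 4) / 2 else a\<^sup>2 / 4)"
  have \<beta>: "t \<le> \<beta>" "c < \<beta>" "\<beta> \<le> a\<^sup>2 / 4" "\<beta> < a\<^sup>2 / 4 \<or> 0 < m"
    using assms by (auto simp: \<beta>_def)
  show ?thesis
  proof (rule strict_mono_deriv_tangent_less[of 0 t \<beta> c "\<lambda>t. \<sigma> * pair_profile a m t"])
    show "continuous_on {0..\<beta>} (\<lambda>t. \<sigma> * pair_profile a m t)"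
      using continuous_on_pair_profile[OF assms(2) \<beta>(3,4)] by (intro continuous_intros)
    show "((\<lambda>t. \<sigma> * pair_profile a m t) has_real_derivative \<sigma> * pair_profile_deriv a m z) (at z)"
      if "0 < z" "z < \<beta>" for z
      using that \<beta> assms by (intro DERIV_cmult has_real_derivative_pair_profile) auto
    show "\<sigma> * pair_profile_deriv a m z < \<sigma> * pair_profile_deriv a m w"
      if "0 < z" "z < w" "w < \<beta>" for z w
      using that \<beta> assms by (intro pair_profile_deriv_strict_mono) auto
  qed (use assms \<beta> in auto)
qed

lemma pair_profile_chord_less:
  assumes "0 < \<sigma> * (m * (m - 1) * (m - 2) * (m - 3))" "0 < a" "0 < t" "t < R"
    and "R \<le> a\<^sup>2 / 4" "R < a\<^sup>2 / 4 \<or> 0 < m"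
  shows "\<sigma> * pair_profile a m t * R < \<sigma> * pair_profile a m 0 * (R - t) + \<sigma> * pair_profile a m R * t"
proof -
  have "(\<sigma> * pair_profile a m t - \<sigma> * pair_profile a m 0) * (R - t)
      < (\<sigma> * pair_profile a m R - \<sigma> * pair_profile a m t) * (t - 0)"
  proof (rule strict_mono_deriv_secant_less[where f' = "\<lambda>t. \<sigma> * pair_profile_deriv a m t"])
    show "continuous_on {0..R} (\<lambda>t. \<sigma> * pair_profile a m t)"
      using continuous_on_pair_profile[OF assms(2,5,6)] by (intro continuous_intros)
    show "((\<lambda>t. \<sigma> * pair_profile a m t) has_real_derivative \<sigma> * pair_profile_deriv a m z) (at z)"
      if "0 < z" "z < R" for z
      using that assms by (intro DERIV_cmult has_real_derivative_pair_profile) auto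
    show "\<sigma> * pair_profile_deriv a m z < \<sigma> * pair_profile_deriv a m w"
      if "0 < z" "z < w" "w < R" for z w
      using that assms by (intro pair_profile_deriv_strict_mono) auto
  qed (use assms in auto)
  then show ?thesis
    by (simp add: algebra_simps)
qed

lemma sum_gt_by_tangent:
  fixes f :: "real \<Rightarrow> real" and t :: "'i \<Rightarrow> real" and c d :: real
  assumes "finite I" "(\<Sum>i\<in>I. t i) = card I * c"
    and tangent: "\<And>i. i \<in> I \<Longrightarrow> t i \<noteq> c \<Longrightarrow> f c + d * (t i - c) < f (t i)"
    and "j \<in> I" "t j \<noteq> c"
  shows "card I * f c < (\<Sum>i\<in>I. f (t i))"
proof -
  have "(\<Sum>i\<in>I. f c + d * (t i - c)) = card I * f c + d * ((\<Sum>i\<in>I. t i) - card I * c)"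
    by (simp add: sum.distrib sum_distrib_left sum_subtractf algebra_simps)
  also have "\<dots> = card I * f c"
    using assms(2) by simp
  finally have lin: "(\<Sum>i\<in>I. f c + d * (t i - c)) = card I * f c" .
  have "f c + d * (t i - c) \<le> f (t i)" if "i \<in> I" for i
    using tangent[OF that] by (cases "t i = c") force+
  then have "(\<Sum>i\<in>I. f c + d * (t i - c)) < (\<Sum>i\<in>I. f (t i))"
    using assms by (intro sum_strict_mono_ex1) auto
  then show ?thesis
    unfolding lin .
qed

lemma sum_lt_by_chord:
  fixes f :: "real \<Rightarrow> real" and t :: "'i \<Rightarrow> real"
  assumes "finite I" "(\<Sum>i\<in>I. t i) = R" "0 < R" "\<And>i. i \<in> I \<Longrightarrow> 0 \<le> t i \<and> t i \<le> R"
    and chord: "\<And>s. 0 < s \<Longrightarrow> s < R \<Longrightarrow> f s * R < f 0 * (R - s) + f R * s"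
    and "j \<in> I" "0 < t j" "t j < R"
  shows "(\<Sum>i\<in>I. f (t i)) < (real (card I) - 1) * f 0 + f R"
proof -
  have le: "f (t i) * R \<le> f 0 * (R - t i) + f R * t i" if "i \<in> I" for i
    using assms(4)[OF that] chord[of "t i"]
    by (cases "t i = 0 \<or> t i = R") (auto simp: algebra_simps)
  have "(\<Sum>i\<in>I. f (t i)) * R = (\<Sum>i\<in>I. f (t i) * R)"
    by (simp add: sum_distrib_right)
  also have "\<dots> < (\<Sum>i\<in>I. f 0 * (R - t i) + f R * t i)"
    using assms le by (intro sum_strict_mono_ex1) auto
  also have "\<dots> = f 0 * (card I * R - (\<Sum>i\<in>I. t i)) + f R * (\<Sum>i\<in>I. t i)"
    by (simp add: sum.distrib sum_subtractf flip: sum_distrib_left)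
  also have "\<dots> = f 0 * (card I * R - R) + f R * R"
    using assms(2) by simp
  also have "\<dots> = ((real (card I) - 1) * f 0 + f R) * R"
    by (simp add: algebra_simps)
  finally show ?thesis
    using \<open>0 < R\<close> by simp
qed

lemma dist_axis_sq:
  fixes M :: "real ^ 'n"
  shows "(dist M (axis i 1))\<^sup>2 = (norm M)\<^sup>2 + 1 - 2 * M $ i"
    and "(dist M (- axis i 1))\<^sup>2 = (norm M)\<^sup>2 + 1 + 2 * M $ i"
  by (simp_all add: dist_norm power2_norm_eq_inner inner_diff_left inner_diff_right
      inner_axis inner_axis' inner_axis_axis algebra_simps)

lemma cross_vertices_eq:
  "(cross_vertices :: (real ^ 'n) set) = range (\<lambda>i. axis i 1) \<union> range (\<lambda>i. - axis i 1)"
  unfolding cross_vertices_def by auto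

lemma finite_cross_vertices: "finite (cross_vertices :: (real ^ 'n) set)"
  unfolding cross_vertices_eq by simp

lemma axis_neq_neg_axis: "axis i (1::real) \<noteq> - axis j 1"
proof
  assume "axis i (1::real) = - axis j 1"
  then have "axis i (1::real) $ i = (- axis j 1) $ i"
    by simp
  then show False
    by (simp add: axis_def split: if_splits)
qed

lemma sum_cross_vertices:
  fixes F :: "real ^ 'n \<Rightarrow> real"
  shows "(\<Sum>A\<in>cross_vertices. F A) = (\<Sum>i\<in>UNIV. F (axis i 1) + F (- axis i 1))"
proof -
  have "inj (\<lambda>i::'n. axis i (1::real))" "inj (\<lambda>i::'n. - axis i (1::real))"
    by (auto intro!: injI simp: axis_eq_axis)
  moreover have "range (\<lambda>i::'n. axis i (1::real)) \<inter> range (\<lambda>i. - axis i 1) = {}"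
    using axis_neq_neg_axis by blast
  ultimately show ?thesis
    unfolding cross_vertices_eq by (simp add: sum.union_disjoint sum.reindex sum.distrib)
qed

lemma sum_sq_eq_norm_sq: "(\<Sum>i\<in>UNIV. (M $ i)\<^sup>2) = (norm (M :: real ^ 'n))\<^sup>2"
  unfolding power2_norm_eq_inner inner_vec_def by (simp add: power2_eq_square)

lemma in_sphere_iff_sum_sq:
  assumes "0 \<le> r"
  shows "(M :: real ^ 'n) \<in> sphere 0 r \<longleftrightarrow> (\<Sum>i\<in>UNIV. (M $ i)\<^sup>2) = r\<^sup>2"
  using assms by (simp add: sum_sq_eq_norm_sq power2_eq_iff_nonneg)

lemma sphere_component_sq_le:
  assumes "0 \<le> r" "(M :: real ^ 'n) \<in> sphere 0 r"
  shows "(M $ i)\<^sup>2 \<le> r\<^sup>2"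
proof -
  have "(M $ i)\<^sup>2 \<le> (\<Sum>j\<in>UNIV. (M $ j)\<^sup>2)"
    by (rule member_le_sum) auto
  with assms show ?thesis
    by (simp add: sum_sq_eq_norm_sq)
qed

lemma pw_eq_powr: "m \<noteq> 0 \<Longrightarrow> pw b m = b powr m"
  by (simp add: pw_def)

lemma pw_zero_exponent: "pw b 0 = 1"
  by (simp add: pw_def)

lemma powr_pair_sum_eq_pair_profile: "powr_pair_sum a m x = pair_profile a m (x\<^sup>2)"
  by (cases "0 \<le> x") (simp_all add: pair_profile_def powr_pair_sum_def)

lemma Cn_sphere_eq_sum:
  fixes M :: "real ^ 'n"
  assumes "M \<in> sphere 0 r" "m \<noteq> 0"
  shows "Cn h (2 * m) M = (\<Sum>i\<in>UNIV. powr_pair_sum (r\<^sup>2 + 1 + h) m (M $ i))"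
  using assms unfolding Cn_def sum_cross_vertices dist_axis_sq powr_pair_sum_def
  by (simp add: pw_eq_powr algebra_simps)

lemma D_pts_iff:
  "(M :: real ^ 'n) \<in> D_pts r \<longleftrightarrow> (\<forall>i. (M $ i)\<^sup>2 = r\<^sup>2 / CARD('n))"
proof -
  have sq: "(r / sqrt CARD('n))\<^sup>2 = r\<^sup>2 / CARD('n)"
    by (simp add: power_divide)
  have "x = r / sqrt CARD('n) \<or> x = - (r / sqrt CARD('n)) \<longleftrightarrow> x\<^sup>2 = r\<^sup>2 / CARD('n)" for x
    unfolding sq[symmetric] by (rule power2_eq_iff[symmetric])
  then show ?thesis
    unfolding D_pts_def by auto
qed

lemma D_pts_subset_sphere:
  assumes "0 \<le> r"
  shows "D_pts r \<subseteq> (sphere 0 r :: (real ^ 'n) set)"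
proof
  fix M :: "real ^ 'n"
  assume "M \<in> D_pts r"
  then have "(\<Sum>i\<in>UNIV. (M $ i)\<^sup>2) = (\<Sum>i\<in>(UNIV :: 'n set). r\<^sup>2 / CARD('n))"
    by (simp add: D_pts_iff)
  then show "M \<in> sphere 0 r"
    using in_sphere_iff_sum_sq[OF assms, of M] by simp
qed

lemma D_pts_nonempty: "D_pts r \<noteq> ({} :: (real ^ 'n) set)"
proof -
  have "(\<chi> i. r / sqrt CARD('n)) \<in> (D_pts r :: (real ^ 'n) set)"
    by (simp add: D_pts_def)
  then show ?thesis
    by blast
qed

lemma E_pts_iff:
  "(M :: real ^ 'n) \<in> E_pts r \<longleftrightarrow> (\<exists>i. (M $ i = r \<or> M $ i = - r) \<and> (\<forall>j. j \<noteq> i \<longrightarrow> M $ j = 0))"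
proof -
  have "M \<in> E_pts r \<longleftrightarrow> (\<exists>i. M = r *\<^sub>R axis i 1 \<or> M = r *\<^sub>R (- axis i 1))"
    unfolding E_pts_def cross_vertices_def by blast
  also have "\<dots> \<longleftrightarrow> (\<exists>i. (M $ i = r \<or> M $ i = - r) \<and> (\<forall>j. j \<noteq> i \<longrightarrow> M $ j = 0))"
    by (intro ex_cong1) (auto simp: vec_eq_iff axis_def)
  finally show ?thesis .
qed

lemma E_pts_subset_sphere:
  assumes "0 \<le> r"
  shows "E_pts r \<subseteq> (sphere 0 r :: (real ^ 'n) set)"
  using assms unfolding E_pts_def cross_vertices_def by auto

lemma E_pts_nonempty: "E_pts r \<noteq> ({} :: (real ^ 'n) set)"
  unfolding E_pts_def cross_vertices_def by blast

lemma sphere_minus_E_pts_intermediate_component: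
  assumes "0 < r" "(M :: real ^ 'n) \<in> sphere 0 r" "M \<notin> E_pts r"
  obtains i where "0 < (M $ i)\<^sup>2" "(M $ i)\<^sup>2 < r\<^sup>2"
proof -
  have sum: "(\<Sum>i\<in>UNIV. (M $ i)\<^sup>2) = r\<^sup>2"
    using assms by (simp add: sum_sq_eq_norm_sq)
  obtain i where "M $ i \<noteq> 0"
    using sum assms(1) by fastforce
  show ?thesis
  proof (cases "(M $ i)\<^sup>2 < r\<^sup>2")
    case True
    with \<open>M $ i \<noteq> 0\<close> show ?thesis
      by (intro that) auto
  next
    case False
    then have "(M $ i)\<^sup>2 = r\<^sup>2"
      using sphere_component_sq_le[of r M i] assms by simp
    then have "M $ i = r \<or> M $ i = - r"
      by (simp add: power2_eq_iff)
    with assms(3) obtain j where "j \<noteq> i" "M $ j \<noteq> 0"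
      unfolding E_pts_iff by blast
    have "(\<Sum>k\<in>{i, j}. (M $ k)\<^sup>2) \<le> (\<Sum>k\<in>UNIV. (M $ k)\<^sup>2)"
      by (rule sum_mono2) auto
    with \<open>j \<noteq> i\<close> \<open>(M $ i)\<^sup>2 = r\<^sup>2\<close> sum have "(M $ j)\<^sup>2 \<le> 0"
      by simp
    with \<open>M $ j \<noteq> 0\<close> show ?thesis
      by simp
  qed
qed

lemma two_mult_le_sq_add_one:
  fixes r h :: real
  assumes "0 \<le> h"
  shows "2 * r \<le> r\<^sup>2 + 1 + h" and "\<not> (h = 0 \<and> r = 1) \<Longrightarrow> 2 * r < r\<^sup>2 + 1 + h"
proof -
  have gap: "r\<^sup>2 + 1 + h - 2 * r = (r - 1)\<^sup>2 + h"
    by (simp add: power2_eq_square algebra_simps)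
  have "0 \<le> (r - 1)\<^sup>2"
    by simp
  with gap assms show "2 * r \<le> r\<^sup>2 + 1 + h"
    by linarith
  assume "\<not> (h = 0 \<and> r = 1)"
  then have "0 < (r - 1)\<^sup>2 \<or> 0 < h"
    using assms by auto
  with gap assms \<open>0 \<le> (r - 1)\<^sup>2\<close> show "2 * r < r\<^sup>2 + 1 + h"
    by linarith
qed

lemma dom_pts_iff:
  "(M :: real ^ 'n) \<in> dom_pts r h \<longleftrightarrow> M \<in> sphere 0 r \<and> (\<forall>i. \<bar>M $ i\<bar> < (r\<^sup>2 + 1 + h) / 2)"
proof -
  have vertex_terms: "(\<forall>A\<in>cross_vertices. 0 < (dist M A)\<^sup>2 + h) \<longleftrightarrow>
      (\<forall>i. 0 < (dist M (axis i 1))\<^sup>2 + h \<and> 0 < (dist M (- axis i 1))\<^sup>2 + h)"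
    unfolding cross_vertices_eq by blast
  have "0 < (dist M (axis i 1))\<^sup>2 + h \<and> 0 < (dist M (- axis i 1))\<^sup>2 + h
      \<longleftrightarrow> \<bar>M $ i\<bar> < (r\<^sup>2 + 1 + h) / 2" if "norm M = r" for i
    unfolding dist_axis_sq that by (auto simp: abs_less_iff)
  then show ?thesis
    unfolding dom_pts_def mem_Collect_eq vertex_terms mem_sphere_0 by blast
qed

lemma sphere_subset_dom_pts:
  assumes "0 < r" "0 \<le> h" "\<not> (h = 0 \<and> r = 1)"
  shows "sphere 0 r \<subseteq> (dom_pts r h :: (real ^ 'n) set)"
proof
  fix M :: "real ^ 'n"
  assume M: "M \<in> sphere 0 r"
  have "\<bar>M $ i\<bar> < (r\<^sup>2 + 1 + h) / 2" for i
    using component_le_norm_cart[of M i] M two_mult_le_sq_add_one(2)[OF assms(2,3)] by simp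
  with M show "M \<in> dom_pts r h"
    unfolding dom_pts_iff by blast
qed

lemma D_pts_subset_dom_pts:
  assumes "2 \<le> CARD('n)" "0 < r" "0 \<le> h"
  shows "D_pts r \<subseteq> (dom_pts r h :: (real ^ 'n) set)"
proof
  fix M :: "real ^ 'n"
  assume M: "M \<in> D_pts r"
  have "r\<^sup>2 / CARD('n) < r\<^sup>2"
    using assms by (simp add: field_simps)
  then have bound: "\<bar>M $ i\<bar> < r" for i
    using M assms(2) by (simp add: D_pts_iff power2_less_imp_less)
  have "\<bar>M $ i\<bar> < (r\<^sup>2 + 1 + h) / 2" for i
    using bound[of i] two_mult_le_sq_add_one(1)[OF assms(3), of r] by simp
  with M D_pts_subset_sphere[of r] assms(2) show "M \<in> dom_pts r h"
    unfolding dom_pts_iff by auto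
qed

lemma Cn_sphere_eq_sum_pair_profile:
  fixes M :: "real ^ 'n"
  assumes "M \<in> sphere 0 r" "m \<noteq> 0"
  shows "Cn h (2 * m) M = (\<Sum>i\<in>UNIV. pair_profile (r\<^sup>2 + 1 + h) m ((M $ i)\<^sup>2))"
  using Cn_sphere_eq_sum[OF assms] by (simp add: powr_pair_sum_eq_pair_profile)

lemma Cn_on_D_pts:
  assumes "0 \<le> r" "m \<noteq> 0" "(M :: real ^ 'n) \<in> D_pts r"
  shows "Cn h (2 * m) M = CARD('n) * pair_profile (r\<^sup>2 + 1 + h) m (r\<^sup>2 / CARD('n))"
proof -
  have "M \<in> sphere 0 r"
    using assms D_pts_subset_sphere[OF assms(1)] by blast
  with assms show ?thesis
    by (simp add: Cn_sphere_eq_sum_pair_profile D_pts_iff)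
qed

lemma Cn_on_E_pts:
  assumes "0 \<le> r" "m \<noteq> 0" "(M :: real ^ 'n) \<in> E_pts r"
  shows "Cn h (2 * m) M
    = (real CARD('n) - 1) * pair_profile (r\<^sup>2 + 1 + h) m 0 + pair_profile (r\<^sup>2 + 1 + h) m (r\<^sup>2)"
proof -
  define g where "g = pair_profile (r\<^sup>2 + 1 + h) m"
  obtain i where i: "M $ i = r \<or> M $ i = - r" "\<And>j. j \<noteq> i \<Longrightarrow> M $ j = 0"
    using assms(3) unfolding E_pts_iff by blast
  have "Cn h (2 * m) M = g ((M $ i)\<^sup>2) + (\<Sum>j\<in>UNIV - {i}. g ((M $ j)\<^sup>2))"
    using assms E_pts_subset_sphere[OF assms(1)]
    by (auto simp: Cn_sphere_eq_sum_pair_profile g_def sum.remove)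
  also have "(\<Sum>j\<in>UNIV - {i}. g ((M $ j)\<^sup>2)) = (\<Sum>j\<in>UNIV - {i}. g 0)"
    using i(2) by (intro sum.cong) auto
  finally show ?thesis
    using i(1) by (auto simp: g_def card_Diff_singleton of_nat_diff)
qed

lemma Cn_less_off_D_pts:
  fixes M0 M :: "real ^ 'n"
  assumes "2 \<le> CARD('n)" "0 < r" "0 \<le> h" "0 < \<sigma> * (m * (m - 1) * (m - 2) * (m - 3))"
    and "M0 \<in> D_pts r" "M \<in> sphere 0 r" "M \<notin> D_pts r"
    and "0 < m \<or> (\<forall>i. \<bar>M $ i\<bar> < (r\<^sup>2 + 1 + h) / 2)"
  shows "\<sigma> * Cn h (2 * m) M0 < \<sigma> * Cn h (2 * m) M"
proof -
  define a where "a = r\<^sup>2 + 1 + h"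
  define c where "c = r\<^sup>2 / CARD('n)"
  have "m \<noteq> 0"
    using assms(4) by auto
  have a: "0 < a" "r \<le> a / 2"
    using assms(2,3) two_mult_le_sq_add_one(1)[OF assms(3), of r]
    by (auto simp: a_def add_pos_nonneg)
  have c: "0 < c" "c < r\<^sup>2" "(\<Sum>i\<in>UNIV. (M $ i)\<^sup>2) = CARD('n) * c"
    using assms(1,2,6) by (auto simp: c_def field_simps sum_sq_eq_norm_sq)
  have R: "r\<^sup>2 \<le> a\<^sup>2 / 4"
    using sqrt_less_half_iff(2)[OF a(1), of "r\<^sup>2"] a assms(2) by simp
  have "(M $ i)\<^sup>2 < a\<^sup>2 / 4" if "\<bar>M $ i\<bar> < a / 2" for i
    using that sqrt_less_half_iff(1)[OF a(1), of "(M $ i)\<^sup>2"] by simp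
  then have interior: "0 < m \<or> (\<forall>i. (M $ i)\<^sup>2 < a\<^sup>2 / 4)"
    using assms(8) by (auto simp: a_def)
  have tangent: "\<sigma> * pair_profile a m c + \<sigma> * pair_profile_deriv a m c * ((M $ i)\<^sup>2 - c)
      < \<sigma> * pair_profile a m ((M $ i)\<^sup>2)" if "(M $ i)\<^sup>2 \<noteq> c" for i
    using pair_profile_tangent_less[OF assms(4) a(1) c(1), of "(M $ i)\<^sup>2"] that c(2) R interior
      sphere_component_sq_le[of r M i] assms(2,6)
    by auto
  obtain j where "(M $ j)\<^sup>2 \<noteq> c"
    using assms(7) by (auto simp: D_pts_iff c_def)
  from sum_gt_by_tangent[of UNIV, OF _ c(3) tangent _ this]
  have "CARD('n) * (\<sigma> * pair_profile a m c) < (\<Sum>i\<in>UNIV. \<sigma> * pair_profile a m ((M $ i)\<^sup>2))"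
    by simp
  moreover have "\<sigma> * Cn h (2 * m) M = (\<Sum>i\<in>UNIV. \<sigma> * pair_profile a m ((M $ i)\<^sup>2))"
    using Cn_sphere_eq_sum_pair_profile[OF assms(6) \<open>m \<noteq> 0\<close>] by (simp add: a_def sum_distrib_left)
  moreover have "\<sigma> * Cn h (2 * m) M0 = CARD('n) * (\<sigma> * pair_profile a m c)"
    using Cn_on_D_pts[of r m M0 h] assms \<open>m \<noteq> 0\<close> by (simp add: a_def c_def)
  ultimately show ?thesis
    by linarith
qed

lemma Cn_less_off_E_pts:
  fixes M0 M :: "real ^ 'n"
  assumes "0 < r" "0 \<le> h" "0 < \<sigma> * (m * (m - 1) * (m - 2) * (m - 3))"
    and "M0 \<in> E_pts r" "M \<in> sphere 0 r" "M \<notin> E_pts r" "0 < m \<or> 2 * r < r\<^sup>2 + 1 + h"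
  shows "\<sigma> * Cn h (2 * m) M < \<sigma> * Cn h (2 * m) M0"
proof -
  define a where "a = r\<^sup>2 + 1 + h"
  have "m \<noteq> 0"
    using assms(3) by auto
  have a: "0 < a" "r \<le> a / 2" "0 < m \<or> r < a / 2"
    using assms(1,2,7) two_mult_le_sq_add_one(1)[OF assms(2), of r]
    by (auto simp: a_def add_pos_nonneg)
  then have R: "r\<^sup>2 \<le> a\<^sup>2 / 4" "r\<^sup>2 < a\<^sup>2 / 4 \<or> 0 < m"
    using sqrt_less_half_iff[OF a(1), of "r\<^sup>2"] assms(1) by auto
  obtain j where j: "0 < (M $ j)\<^sup>2" "(M $ j)\<^sup>2 < r\<^sup>2"
    using sphere_minus_E_pts_intermediate_component[OF assms(1,5,6)] .
  have "(\<Sum>i\<in>UNIV. \<sigma> * pair_profile a m ((M $ i)\<^sup>2))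
      < (real CARD('n) - 1) * (\<sigma> * pair_profile a m 0) + \<sigma> * pair_profile a m (r\<^sup>2)"
  proof (rule sum_lt_by_chord[where t = "\<lambda>i. (M $ i)\<^sup>2" and j = j])
    show "(\<Sum>i\<in>UNIV. (M $ i)\<^sup>2) = r\<^sup>2"
      using assms(5) by (simp add: sum_sq_eq_norm_sq)
    show "0 \<le> (M $ i)\<^sup>2 \<and> (M $ i)\<^sup>2 \<le> r\<^sup>2" for i
      using sphere_component_sq_le[of r M i] assms by simp
    show "\<sigma> * pair_profile a m s * r\<^sup>2
        < \<sigma> * pair_profile a m 0 * (r\<^sup>2 - s) + \<sigma> * pair_profile a m (r\<^sup>2) * s"
      if "0 < s" "s < r\<^sup>2" for s
      using pair_profile_chord_less[OF assms(3) a(1) that R] by simp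
  qed (use assms(1) j in auto)
  moreover have "\<sigma> * Cn h (2 * m) M = (\<Sum>i\<in>UNIV. \<sigma> * pair_profile a m ((M $ i)\<^sup>2))"
    using Cn_sphere_eq_sum_pair_profile[OF assms(5) \<open>m \<noteq> 0\<close>] by (simp add: a_def sum_distrib_left)
  moreover have "\<sigma> * Cn h (2 * m) M0
      = (real CARD('n) - 1) * (\<sigma> * pair_profile a m 0) + \<sigma> * pair_profile a m (r\<^sup>2)"
    unfolding Cn_on_E_pts[OF less_imp_le[OF assms(1)] \<open>m \<noteq> 0\<close> assms(4), of h]
    by (simp add: a_def algebra_simps)
  ultimately show ?thesis
    by linarith
qed

lemma argmin_on_uminus: "argmin_on (\<lambda>x. - f x) S = argmax_on f S"
  by (simp add: argmin_on_def argmax_on_def)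

lemma argmax_on_uminus: "argmax_on (\<lambda>x. - f x) S = argmin_on f S"
  by (simp add: argmin_on_def argmax_on_def)

lemma argmin_on_eqI:
  assumes "T \<subseteq> S" "T \<noteq> {}" "\<And>x y. x \<in> T \<Longrightarrow> y \<in> T \<Longrightarrow> f x = f y"
    and "\<And>x y. x \<in> T \<Longrightarrow> y \<in> S \<Longrightarrow> y \<notin> T \<Longrightarrow> f x < f y"
  shows "argmin_on f S = T"
proof -
  have "x \<in> T" if "x \<in> S" "\<forall>y\<in>S. f x \<le> f y" for x
  proof (rule ccontr)
    assume "x \<notin> T"
    obtain z where "z \<in> T"
      using assms(2) by blast
    then have "f z < f x" and "f x \<le> f z"
      using assms(1,4) that \<open>x \<notin> T\<close> by auto
    then show False
      by simp
  qed
  moreover have "f x \<le> f y" if "x \<in> T" "y \<in> S" for x y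
    using assms(3,4)[OF that(1)] that(2) by (cases "y \<in> T") (auto intro: less_imp_le)
  ultimately show ?thesis
    unfolding argmin_on_def using assms(1) by blast
qed

lemma argmax_on_eqI:
  assumes "T \<subseteq> S" "T \<noteq> {}" "\<And>x y. x \<in> T \<Longrightarrow> y \<in> T \<Longrightarrow> f x = f y"
    and "\<And>x y. x \<in> T \<Longrightarrow> y \<in> S \<Longrightarrow> y \<notin> T \<Longrightarrow> f y < f x"
  shows "argmax_on f S = T"
proof -
  have "argmin_on (\<lambda>x. - f x) S = T"
  proof (rule argmin_on_eqI[OF assms(1,2)])
    show "- f x = - f y" if "x \<in> T" "y \<in> T" for x y
      using assms(3)[OF that] by simp
    show "- f x < - f y" if "x \<in> T" "y \<in> S" "y \<notin> T" for x y
      using assms(4)[OF that] by simp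
  qed
  then show ?thesis
    by (simp add: argmin_on_uminus)
qed

lemma argmin_on_Cn_eq_D_pts:
  fixes S :: "(real ^ 'n) set"
  assumes "2 \<le> CARD('n)" "0 < r" "0 \<le> h" "0 < \<sigma> * (m * (m - 1) * (m - 2) * (m - 3))"
    and "D_pts r \<subseteq> S" "S \<subseteq> sphere 0 r" "\<And>M. M \<in> S \<Longrightarrow> 0 < m \<or> (\<forall>i. \<bar>M $ i\<bar> < (r\<^sup>2 + 1 + h) / 2)"
  shows "argmin_on (\<lambda>M. \<sigma> * Cn h (2 * m) M) S = D_pts r"
proof (rule argmin_on_eqI[OF assms(5) D_pts_nonempty])
  have "m \<noteq> 0"
    using assms(4) by auto
  then show "\<sigma> * Cn h (2 * m) M = \<sigma> * Cn h (2 * m) M'"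
    if "M \<in> D_pts r" "M' \<in> D_pts r" for M M' :: "real ^ 'n"
    using Cn_on_D_pts[OF less_imp_le[OF assms(2)] \<open>m \<noteq> 0\<close> that(1)]
      Cn_on_D_pts[OF less_imp_le[OF assms(2)] \<open>m \<noteq> 0\<close> that(2)] by simp
  show "\<sigma> * Cn h (2 * m) M < \<sigma> * Cn h (2 * m) M'"
    if "M \<in> D_pts r" "M' \<in> S" "M' \<notin> D_pts r" for M M' :: "real ^ 'n"
    by (rule Cn_less_off_D_pts[OF assms(1-4) that(1)]) (use that assms(6,7) in auto)
qed

lemma argmax_on_Cn_eq_E_pts:
  fixes S :: "(real ^ 'n) set"
  assumes "0 < r" "0 \<le> h" "0 < \<sigma> * (m * (m - 1) * (m - 2) * (m - 3))"
    and "E_pts r \<subseteq> S" "S \<subseteq> sphere 0 r" "0 < m \<or> 2 * r < r\<^sup>2 + 1 + h"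
  shows "argmax_on (\<lambda>M. \<sigma> * Cn h (2 * m) M) S = E_pts r"
proof (rule argmax_on_eqI[OF assms(4) E_pts_nonempty])
  have "m \<noteq> 0"
    using assms(3) by auto
  then show "\<sigma> * Cn h (2 * m) M = \<sigma> * Cn h (2 * m) M'"
    if "M \<in> E_pts r" "M' \<in> E_pts r" for M M' :: "real ^ 'n"
    using Cn_on_E_pts[OF less_imp_le[OF assms(1)] \<open>m \<noteq> 0\<close> that(1)]
      Cn_on_E_pts[OF less_imp_le[OF assms(1)] \<open>m \<noteq> 0\<close> that(2)] by simp
  show "\<sigma> * Cn h (2 * m) M' < \<sigma> * Cn h (2 * m) M"
    if "M \<in> E_pts r" "M' \<in> S" "M' \<notin> E_pts r" for M M' :: "real ^ 'n"
    by (rule Cn_less_off_E_pts[OF assms(1-3) that(1)]) (use that assms(5,6) in auto)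
qed

lemma Cn_extrema_on_sphere_convex:
  assumes "2 \<le> CARD('n)" "0 < r" "0 \<le> h" "0 < lam" "0 < lam * (lam - 2) * (lam - 4) * (lam - 6)"
  shows "argmin_on (Cn h lam) (sphere (0 :: real ^ 'n) r) = D_pts r"
    and "argmax_on (Cn h lam) (sphere (0 :: real ^ 'n) r) = E_pts r"
proof -
  define m where "m = lam / 2"
  have "lam * (lam - 2) * (lam - 4) * (lam - 6) = 16 * (m * (m - 1) * (m - 2) * (m - 3))"
    by (simp add: m_def field_simps)
  with assms(5) have \<sigma>: "0 < 1 * (m * (m - 1) * (m - 2) * (m - 3))"
    by simp
  have "lam = 2 * m" "0 < m"
    using assms(4) by (simp_all add: m_def)
  then show "argmin_on (Cn h lam) (sphere (0 :: real ^ 'n) r) = D_pts r"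
    and "argmax_on (Cn h lam) (sphere (0 :: real ^ 'n) r) = E_pts r"
    using argmin_on_Cn_eq_D_pts[OF assms(1-3) \<sigma> D_pts_subset_sphere order_refl]
      argmax_on_Cn_eq_E_pts[OF assms(2,3) \<sigma> E_pts_subset_sphere order_refl] assms(2)
    by simp_all
qed

lemma Cn_extrema_on_sphere_concave:
  assumes "2 \<le> CARD('n)" "0 < r" "0 \<le> h" "0 < lam" "lam * (lam - 2) * (lam - 4) * (lam - 6) < 0"
  shows "argmax_on (Cn h lam) (sphere (0 :: real ^ 'n) r) = D_pts r"
    and "argmin_on (Cn h lam) (sphere (0 :: real ^ 'n) r) = E_pts r"
proof -
  define m where "m = lam / 2"
  have "lam * (lam - 2) * (lam - 4) * (lam - 6) = 16 * (m * (m - 1) * (m - 2) * (m - 3))"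
    by (simp add: m_def field_simps)
  with assms(5) have \<sigma>: "0 < - 1 * (m * (m - 1) * (m - 2) * (m - 3))"
    by simp
  have "lam = 2 * m" "0 < m"
    using assms(4) by (simp_all add: m_def)
  then show "argmax_on (Cn h lam) (sphere (0 :: real ^ 'n) r) = D_pts r"
    and "argmin_on (Cn h lam) (sphere (0 :: real ^ 'n) r) = E_pts r"
    using argmin_on_Cn_eq_D_pts[OF assms(1-3) \<sigma> D_pts_subset_sphere order_refl]
      argmax_on_Cn_eq_E_pts[OF assms(2,3) \<sigma> E_pts_subset_sphere order_refl] assms(2)
    by (simp_all add: argmin_on_uminus argmax_on_uminus)
qed

lemma obtain_distinct_indices:
  assumes "2 \<le> CARD('n)"
  obtains i j :: 'n where "i \<noteq> j"
  using assms card_le_Suc0_iff_eq[of "UNIV :: 'n set"] by fastforce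

lemma two_coordinate_vector_in_sphere:
  fixes i j :: "'n::finite"
  assumes "i \<noteq> j" "s\<^sup>2 + q\<^sup>2 = r\<^sup>2" "0 \<le> r"
  shows "(\<chi> k. if k = i then s else if k = j then q else 0) \<in> (sphere 0 r :: (real ^ 'n) set)"
proof -
  let ?M = "(\<chi> k. if k = i then s else if k = j then q else 0) :: real ^ 'n"
  have "(?M $ k)\<^sup>2 = (if k = i then s\<^sup>2 else 0) + (if k = j then q\<^sup>2 else 0)" for k
    using assms(1) by auto
  then have "(\<Sum>k\<in>UNIV. (?M $ k)\<^sup>2) = s\<^sup>2 + q\<^sup>2"
    by (simp add: sum.distrib)
  with assms(2) in_sphere_iff_sum_sq[OF assms(3), of ?M] show ?thesis
    by simp
qed

lemma Cn_ge_vertex_term: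
  fixes M :: "real ^ 'n"
  assumes "A \<in> cross_vertices"
  shows "pw ((dist M A)\<^sup>2 + h) (lam / 2) \<le> Cn h lam M"
  unfolding Cn_def
  by (rule member_le_sum[OF assms _ finite_cross_vertices]) (simp add: pw_def)

lemma Cn_unbounded_near_vertices:
  assumes "2 \<le> CARD('n)" "lam < 0"
  shows "\<not> bdd_above (Cn 0 lam ` (dom_pts 1 0 :: (real ^ 'n) set))"
proof
  assume "bdd_above (Cn 0 lam ` (dom_pts 1 0 :: (real ^ 'n) set))"
  then obtain B where B: "\<And>M. M \<in> (dom_pts 1 0 :: (real ^ 'n) set) \<Longrightarrow> Cn 0 lam M \<le> B"
    unfolding bdd_above_def by auto
  obtain i j :: 'n where "i \<noteq> j"
    using obtain_distinct_indices[OF assms(1)] by blast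
  define K where "K = max B 1 + 1"
  define \<delta> where "\<delta> = K powr (2 / lam)"
  have K: "1 < K" "B < K"
    by (auto simp: K_def)
  have \<delta>: "0 < \<delta>" "\<delta> < 1" "\<delta> powr (lam / 2) = K"
    using K assms(2) by (auto simp: \<delta>_def powr_powr divide_neg_pos intro!: powr_less_one)
  define s where "s = 1 - \<delta> / 2"
  define q where "q = sqrt (1 - s\<^sup>2)"
  have s: "0 < s" "s < 1"
    using \<delta> by (auto simp: s_def)
  then have "0 < s\<^sup>2" "s\<^sup>2 < 1"
    by (simp_all add: abs_square_less_1)
  then have q: "q\<^sup>2 = 1 - s\<^sup>2" "0 \<le> q" "q < 1"
    by (simp_all add: q_def)
  define M :: "real ^ 'n" where "M = (\<chi> k. if k = i then s else if k = j then q else 0)"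
  have "M \<in> sphere 0 1"
    unfolding M_def using two_coordinate_vector_in_sphere[OF \<open>i \<noteq> j\<close>, of s q 1] q by simp
  moreover have "\<bar>M $ k\<bar> < 1" for k
    using s q by (simp add: M_def)
  ultimately have "M \<in> dom_pts 1 0"
    by (simp add: dom_pts_iff)
  moreover have "(dist M (axis i 1))\<^sup>2 = \<delta>"
    using \<open>M \<in> sphere 0 1\<close> by (simp add: dist_axis_sq M_def s_def)
  then have "K \<le> Cn 0 lam M"
    using Cn_ge_vertex_term[of "axis i 1" M 0 lam] \<delta> by (auto simp: cross_vertices_def pw_def)
  ultimately show False
    using B K by fastforce
qed

lemma Cn_extrema_negative_exponent:
  assumes "2 \<le> CARD('n)" "0 < r" "0 \<le> h" "lam < 0"
  shows "argmin_on (Cn h lam) (dom_pts r h :: (real ^ 'n) set) = D_pts r"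
    and "\<not> (h = 0 \<and> r = 1) \<Longrightarrow> argmax_on (Cn h lam) (dom_pts r h :: (real ^ 'n) set) = E_pts r"
    and "h = 0 \<and> r = 1 \<Longrightarrow> \<not> bdd_above (Cn h lam ` (dom_pts r h :: (real ^ 'n) set))"
proof -
  define m where "m = lam / 2"
  have "lam = 2 * m" "m < 0"
    using assms(4) by (simp_all add: m_def)
  have "0 < m * (m - 1)" "0 < (m - 2) * (m - 3)"
    using \<open>m < 0\<close> by (simp_all add: mult_neg_neg)
  then have \<sigma>: "0 < 1 * (m * (m - 1) * (m - 2) * (m - 3))"
    by (metis mult_pos_pos mult.assoc mult_1)
  have dom_sphere: "dom_pts r h \<subseteq> (sphere 0 r :: (real ^ 'n) set)"
    by (auto simp: dom_pts_iff)
  show "argmin_on (Cn h lam) (dom_pts r h :: (real ^ 'n) set) = D_pts r"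
    using argmin_on_Cn_eq_D_pts[OF assms(1-3) \<sigma> D_pts_subset_dom_pts[OF assms(1-3)] dom_sphere]
    by (simp add: \<open>lam = 2 * m\<close> dom_pts_iff)
  show "argmax_on (Cn h lam) (dom_pts r h :: (real ^ 'n) set) = E_pts r" if "\<not> (h = 0 \<and> r = 1)"
  proof -
    have "E_pts r \<subseteq> (dom_pts r h :: (real ^ 'n) set)"
      using E_pts_subset_sphere[OF less_imp_le[OF assms(2)]]
        sphere_subset_dom_pts[OF assms(2,3) that]
      by (rule order_trans)
    then show ?thesis
      using argmax_on_Cn_eq_E_pts[OF assms(2,3) \<sigma> _ dom_sphere]
        two_mult_le_sq_add_one(2)[OF assms(3) that]
      by (simp add: \<open>lam = 2 * m\<close>)
  qed
  show "\<not> bdd_above (Cn h lam ` (dom_pts r h :: (real ^ 'n) set))" if "h = 0 \<and> r = 1"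
    using Cn_unbounded_near_vertices[OF assms(1,4)] that by simp
qed

lemma powr_pair_sum_integer_exponents:
  assumes "\<bar>x\<bar> \<le> a / 2"
  shows "powr_pair_sum a 1 x = 2 * a"
    and "powr_pair_sum a 2 x = 2 * a\<^sup>2 + 8 * x\<^sup>2"
    and "powr_pair_sum a 3 x = 2 * a ^ 3 + 24 * a * x\<^sup>2"
proof -
  have "0 \<le> a + 2 * x" "0 \<le> a - 2 * x"
    using assms by (auto simp: abs_le_iff)
  then show "powr_pair_sum a 1 x = 2 * a"
    and "powr_pair_sum a 2 x = 2 * a\<^sup>2 + 8 * x\<^sup>2"
    and "powr_pair_sum a 3 x = 2 * a ^ 3 + 24 * a * x\<^sup>2"
    by (simp_all add: powr_pair_sum_def power2_eq_square power3_eq_cube algebra_simps)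
qed

lemma Cn_sphere_eq_if_affine:
  fixes M :: "real ^ 'n" and r \<alpha> \<beta> :: real
  assumes "0 \<le> r" "M \<in> sphere 0 r" "m \<noteq> 0"
    and "\<And>x. \<bar>x\<bar> \<le> r \<Longrightarrow> powr_pair_sum (r\<^sup>2 + 1 + h) m x = \<alpha> + \<beta> * x\<^sup>2"
  shows "Cn h (2 * m) M = CARD('n) * \<alpha> + \<beta> * r\<^sup>2"
proof -
  have "Cn h (2 * m) M = (\<Sum>i\<in>UNIV. \<alpha> + \<beta> * (M $ i)\<^sup>2)"
    unfolding Cn_sphere_eq_sum[OF assms(2,3)]
    using assms(2,4) component_le_norm_cart[of M] by (intro sum.cong) auto
  also have "\<dots> = CARD('n) * \<alpha> + \<beta> * r\<^sup>2"
    using assms(2) by (simp add: sum.distrib sum_sq_eq_norm_sq flip: sum_distrib_left)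
  finally show ?thesis .
qed

lemma Cn_constant_on_sphere:
  fixes M M' :: "real ^ 'n"
  assumes "0 < r" "0 \<le> h" "lam \<in> {0, 2, 4, 6}" "M \<in> sphere 0 r" "M' \<in> sphere 0 r"
  shows "Cn h lam M = Cn h lam M'"
proof -
  define a where "a = r\<^sup>2 + 1 + h"
  have small: "\<bar>x\<bar> \<le> a / 2" if "\<bar>x\<bar> \<le> r" for x
    using that two_mult_le_sq_add_one(1)[OF assms(2), of r] by (simp add: a_def)
  show ?thesis
  proof (cases "lam = 0")
    case True
    then show ?thesis
      by (simp add: Cn_def pw_zero_exponent)
  next
    case False
    with assms(3) consider "lam = 2 * 1" | "lam = 2 * 2" | "lam = 2 * 3"
      by auto
    then obtain m \<alpha> \<beta> where "lam = 2 * m" "m \<noteq> 0"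
      and "\<And>x. \<bar>x\<bar> \<le> r \<Longrightarrow> powr_pair_sum a m x = \<alpha> + \<beta> * x\<^sup>2"
    proof cases
      case 1
      then show ?thesis
        using that[of 1 "2 * a" 0] powr_pair_sum_integer_exponents(1)[OF small] by simp
    next
      case 2
      then show ?thesis
        using that[of 2 "2 * a\<^sup>2" 8] powr_pair_sum_integer_exponents(2)[OF small] by simp
    next
      case 3
      then show ?thesis
        using that[of 3 "2 * a ^ 3" "24 * a"] powr_pair_sum_integer_exponents(3)[OF small] by simp
    qed
    then show ?thesis
      using Cn_sphere_eq_if_affine[OF _ assms(4) \<open>m \<noteq> 0\<close>]
        Cn_sphere_eq_if_affine[OF _ assms(5) \<open>m \<noteq> 0\<close>] assms(1)
      by (simp add: a_def)
  qed
qed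

lemma Cn_nonconstant_on_sphere:
  assumes "2 \<le> CARD('n)" "0 < r" "0 \<le> h" "lam \<notin> {0, 2, 4, 6}"
  obtains M M' :: "real ^ 'n" where "M \<in> sphere 0 r" "M' \<in> sphere 0 r" "Cn h lam M \<noteq> Cn h lam M'"
proof -
  define m where "m = lam / 2"
  define \<sigma> where "\<sigma> = sgn (m * (m - 1) * (m - 2) * (m - 3))"
  have "m * (m - 1) * (m - 2) * (m - 3) \<noteq> 0"
    using assms(4) by (auto simp: m_def)
  moreover have "0 < sgn x * x" if "x \<noteq> 0" for x :: real
    using that by (simp add: sgn_if mult_neg_neg)
  ultimately have \<sigma>: "0 < \<sigma> * (m * (m - 1) * (m - 2) * (m - 3))"
    unfolding \<sigma>_def by blast
  obtain i j :: 'n where "i \<noteq> j"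
    using obtain_distinct_indices[OF assms(1)] by blast
  define M0 :: "real ^ 'n" where "M0 = (\<chi> k. r / sqrt CARD('n))"
  \<comment> \<open>a point of the sphere off \<open>D_pts r\<close>, also when \<open>CARD('n) = 2\<close>\<close>
  define M :: "real ^ 'n"
    where "M = (\<chi> k. if k = i then 3 * r / 5 else if k = j then 4 * r / 5 else 0)"
  have "M0 \<in> D_pts r"
    by (simp add: M0_def D_pts_def)
  have "M \<in> sphere 0 r"
    unfolding M_def using assms(2)
    by (intro two_coordinate_vector_in_sphere[OF \<open>i \<noteq> j\<close>])
      (simp_all add: power2_eq_square field_simps)
  moreover have "M \<notin> D_pts r"
  proof
    assume "M \<in> D_pts r"
    then have "(M $ i)\<^sup>2 = (M $ j)\<^sup>2"
      by (simp add: D_pts_iff)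
    with \<open>i \<noteq> j\<close> assms(2) show False
      by (simp add: M_def power2_eq_square)
  qed
  moreover have "\<bar>M $ k\<bar> < (r\<^sup>2 + 1 + h) / 2" for k
    using assms(2) two_mult_le_sq_add_one(1)[OF assms(3), of r] by (simp add: M_def)
  ultimately have "\<sigma> * Cn h (2 * m) M0 < \<sigma> * Cn h (2 * m) M"
    by (intro Cn_less_off_D_pts[OF assms(1-3) \<sigma> \<open>M0 \<in> D_pts r\<close>]) auto
  then have "Cn h lam M0 \<noteq> Cn h lam M"
    by (auto simp: m_def)
  moreover have "M0 \<in> sphere 0 r"
    using \<open>M0 \<in> D_pts r\<close> D_pts_subset_sphere[OF less_imp_le[OF assms(2)]] by blast
  ultimately show ?thesis
    using that \<open>M \<in> sphere 0 r\<close> by blast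
qed

lemma Cn_constant_on_sphere_iff:
  assumes "2 \<le> CARD('n)" "0 < r" "0 \<le> h"
  shows "(\<forall>M\<in>sphere (0 :: real ^ 'n) r. \<forall>M'\<in>sphere (0 :: real ^ 'n) r. Cn h lam M = Cn h lam M')
    \<longleftrightarrow> lam \<in> {0, 2, 4, 6}"
  using Cn_constant_on_sphere[OF assms(2,3)] Cn_nonconstant_on_sphere[OF assms] by metis

theorem theorem6p2:
  fixes r h :: real
  assumes n2: "CARD('n) \<ge> 2"
    and r: "r > 0" and h: "h \<ge> 0"
  shows
    "(\<forall>lam::real. lam < 0 \<longrightarrow>
        argmin_on (Cn h lam) (dom_pts r h :: (real ^ 'n) set) = D_pts r
      \<and> (\<not> (h = 0 \<and> r = 1) \<longrightarrow> argmax_on (Cn h lam) (dom_pts r h :: (real ^ 'n) set) = E_pts r)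
      \<and> (h = 0 \<and> r = 1 \<longrightarrow> \<not> bdd_above (Cn h lam ` (dom_pts r h :: (real ^ 'n) set))))
   \<and> (\<forall>lam::real. (\<forall>M\<in>sphere (0 :: real ^ 'n) r. \<forall>M'\<in>sphere (0 :: real ^ 'n) r.
          Cn h lam M = Cn h lam M') \<longleftrightarrow> lam \<in> {0, 2, 4, 6})
   \<and> (\<forall>lam::real. (0 < lam \<and> lam < 2) \<or> (4 < lam \<and> lam < 6) \<longrightarrow>
        argmax_on (Cn h lam) (sphere (0 :: real ^ 'n) r) = D_pts r
      \<and> argmin_on (Cn h lam) (sphere (0 :: real ^ 'n) r) = E_pts r)
   \<and> (\<forall>lam::real. 2 < lam \<and> lam < 4 \<longrightarrow>
        argmin_on (Cn h lam) (sphere (0 :: real ^ 'n) r) = D_pts r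
      \<and> argmax_on (Cn h lam) (sphere (0 :: real ^ 'n) r) = E_pts r)
   \<and> (\<forall>lam::real. 6 < lam \<longrightarrow>
        argmax_on (Cn h lam) (sphere (0 :: real ^ 'n) r) = E_pts r
      \<and> argmin_on (Cn h lam) (sphere (0 :: real ^ 'n) r) = D_pts r)"
proof -
  have split:
    "lam * (lam - 2) * (lam - 4) * (lam - 6) = (lam * (lam - 2)) * ((lam - 4) * (lam - 6))"
    for lam :: real
    by (simp add: mult.assoc)
  have concave: "lam * (lam - 2) * (lam - 4) * (lam - 6) < 0"
    if "(0 < lam \<and> lam < 2) \<or> (4 < lam \<and> lam < 6)" for lam :: real
    using that unfolding split by (auto simp: mult_less_0_iff zero_less_mult_iff)
  have convex: "0 < lam * (lam - 2) * (lam - 4) * (lam - 6)"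
    if "(2 < lam \<and> lam < 4) \<or> 6 < lam" for lam :: real
    using that unfolding split by (auto simp: mult_less_0_iff zero_less_mult_iff)
  show ?thesis
    using Cn_extrema_negative_exponent[OF n2 r h] Cn_constant_on_sphere_iff[OF n2 r h]
      Cn_extrema_on_sphere_concave[OF n2 r h _ concave]
      Cn_extrema_on_sphere_convex[OF n2 r h _ convex]
    by (intro conjI allI impI) auto
qed

end
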